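(* Let $d\ge 1$ and $\eta>0$. Consider two agents with opinions $\mathbf{X}_t^{(1)},\mathbf{X}_t^{(2)}\in\mathbb{S}^{d-1}$ following the HJMR dynamics $\mathbf{X}_{t+1}^{(i)}=P_{\mathbb{S}^{d-1}}\big(\mathbf{X}_t^{(i)}+\eta\langle\mathbf{X}_t^{(i)},\xi_t\rangle\xi_t\big)$, $i=1,2$, where $\xi_0,\xi_1,\ldots$ are i.i.d. uniform on the standard basis $\{\mathbf{e}_1,\ldots,\mathbf{e}_d\}$. Let $\mathbf{X}_0=(\mathbf{X}_0^{(1)},\mathbf{X}_0^{(2)})$ be such that $\mathbf{X}_0^{(1)}$ and $\mathbf{X}_0^{(2)}$ have the same support (the same set of nonzero coordinates) but $\mathbf{X}_0^{(1)}\neq\pm\mathbf{X}_0^{(2)}$. Then: (1) $\mathbf{X}_t$ weakly polarizes: for every $\epsilon>0$, $\Pr(\rho(\mathbf{X}_t,P)\ge\epsilon)\to 0$ as $t\to\infty$. (2) With probability $1$, $\|\mathbf{X}_t^{(1)}-\mathbf{X}_t^{(2)}\|_2$ converges neither to $0$ nor to $2$; in particular $\mathbf{X}_t$ does not strongly polarize with positive probability.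
   Context: $\mathbb{S}^{d-1}$ is the unit sphere in $\mathbb{R}^d$, $P_{\mathbb{S}^{d-1}}(\mathbf{x})=\mathbf{x}/\|\mathbf{x}\|_2$. The polarized set (for two agents) is $P=\{(\mathbf{x},\sigma\mathbf{x}):\mathbf{x}\in\mathbb{S}^{d-1},\sigma\in\{-1,1\}\}$ and $\rho(\mathbf{z},P)=\inf_{\mathbf{y}\in P}\|\mathbf{z}-\mathbf{y}\|_2$. Strong polarization means $\rho(\mathbf{X}_t,P)\to0$ almost surely. *)

theory Defs
  imports "HOL-Probability.Probability"
begin

definition sphere_proj :: "real ^ 'd \<Rightarrow> real ^ 'd" where
  "sphere_proj x = (1 / norm x) *\<^sub>R x"

definition hjmr_step :: "real \<Rightarrow> 'd::finite \<Rightarrow> real ^ 'd \<Rightarrow> real ^ 'd" where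
  "hjmr_step \<eta> k x = sphere_proj (x + (\<eta> * (x \<bullet> axis k 1)) *\<^sub>R axis k 1)"

primrec hjmr_traj :: "real \<Rightarrow> ('a \<Rightarrow> nat \<Rightarrow> 'd::finite) \<Rightarrow> real ^ 'd \<Rightarrow> 'a \<Rightarrow> nat \<Rightarrow> real ^ 'd" where
  "hjmr_traj \<eta> \<xi> x0 \<omega> 0 = x0"
| "hjmr_traj \<eta> \<xi> x0 \<omega> (Suc t) = hjmr_step \<eta> (\<xi> \<omega> t) (hjmr_traj \<eta> \<xi> x0 \<omega> t)"

text \<open>The polarized set P = {(x, sigma x) : x in S^(d-1), sigma in {-1,1}} in R^d x R^d
  (the product norm is the Euclidean norm of R^(2d)).\<close>
definition polarized_set :: "((real ^ 'd) \<times> (real ^ 'd)) set" where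
  "polarized_set = {(x, \<sigma> *\<^sub>R x) | x \<sigma>. norm x = 1 \<and> (\<sigma> = -1 \<or> \<sigma> = 1)}"

definition rho_P :: "(real ^ 'd) \<times> (real ^ 'd) \<Rightarrow> real" where
  "rho_P z = infdist z polarized_set"

definition support :: "real ^ 'd \<Rightarrow> 'd set" where
  "support x = {i. x $ i \<noteq> 0}"

end

theory Submission
  imports Defs
begin

text \<open>After \<open>t\<close> steps each opinion is its initial value with coordinate \<open>j\<close> multiplied by
  \<open>(1 + \<eta>)\<^bsup>N\<^sub>t(j)\<^esup>\<close>, then normalized, where \<open>N\<^sub>t(j)\<close> counts the visits of \<open>e\<^sub>j\<close>.

  Weak polarization: by the central limit theorem any two visit counts differ by more than a
  fixed \<open>K\<close> with probability tending to one, and then both opinions lie within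
  \<open>O((1 + \<eta>)\<^sup>-\<^sup>K)\<close> of \<open>\<plusminus>e\<^sub>k\<close> for the most visited coordinate \<open>k\<close> of the common support.

  No strong polarization: \<open>\<rho> \<rightarrow> 0\<close> forces every \<open>2 \<times> 2\<close> minor of the two opinions to vanish.
  Reweighting multiplies the \<open>(j, k)\<close> minor by \<open>(1 + \<eta>)\<^bsup>N(j) + N(k)\<^esup>\<close> over the product of
  the norms, and as the initial opinions are neither equal nor opposite but share their support,
  some initial minor is nonzero. Hence some label falls behind the leading one by an unbounded
  amount. That is a tail event of the i.i.d. labels, so it has probability 0 or 1 by Kolmogorov's
  law; by symmetry a fixed label leads at any given time with probability at least \<open>1 / d\<close>, so
  the probability is 0.\<close>

definition visits :: "(nat \<Rightarrow> 'a \<Rightarrow> 'd) \<Rightarrow> 'a \<Rightarrow> 'd \<Rightarrow> nat \<Rightarrow> nat" where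
  "visits \<xi> \<omega> j t = card {s. s < t \<and> \<xi> s \<omega> = j}"

lemma visits_0 [simp]: "visits \<xi> \<omega> j 0 = 0"
  by (simp add: visits_def)

lemma visits_Suc: "visits \<xi> \<omega> j (Suc t) = visits \<xi> \<omega> j t + (if \<xi> t \<omega> = j then 1 else 0)"
proof -
  have "{s. s < Suc t \<and> \<xi> s \<omega> = j} = {s. s < t \<and> \<xi> s \<omega> = j} \<union> (if \<xi> t \<omega> = j then {t} else {})"
    by (auto simp: less_Suc_eq)
  then show ?thesis by (simp add: visits_def)
qed

lemma visits_eq_sum: "real (visits \<xi> \<omega> j t) = (\<Sum>s<t. if \<xi> s \<omega> = j then 1 else 0)"
  by (induction t) (simp_all add: visits_Suc)

lemma visits_shift: "visits \<xi> \<omega> j (m + t) = visits \<xi> \<omega> j m + visits (\<lambda>s. \<xi> (m + s)) \<omega> j t"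
  by (induction t) (simp_all add: visits_Suc)

definition reweight :: "real \<Rightarrow> real ^ 'd \<Rightarrow> ('d \<Rightarrow> nat) \<Rightarrow> real ^ 'd" where
  "reweight q x n = (\<chi> j. q ^ n j * x $ j)"

lemma reweight_nth [simp]: "reweight q x n $ j = q ^ n j * x $ j"
  by (simp add: reweight_def)

lemma reweight_nonzero: "q > 0 \<Longrightarrow> x \<noteq> 0 \<Longrightarrow> reweight q x n \<noteq> 0"
  by (auto simp: vec_eq_iff)

lemma sphere_proj_scaleR: "c > 0 \<Longrightarrow> sphere_proj (c *\<^sub>R v) = sphere_proj v"
  by (simp add: sphere_proj_def)

lemma norm_sphere_proj: "v \<noteq> 0 \<Longrightarrow> norm (sphere_proj v) = 1"
  by (simp add: sphere_proj_def)

lemma hjmr_traj_eq_reweight: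
  assumes "\<eta> > 0" "norm x = 1"
  shows "hjmr_traj \<eta> (\<lambda>\<omega> t. \<xi> t \<omega>) x \<omega> t = sphere_proj (reweight (1 + \<eta>) x (\<lambda>j. visits \<xi> \<omega> j t))"
proof (induction t)
  case 0
  have "reweight (1 + \<eta>) x (\<lambda>j. visits \<xi> \<omega> j 0) = x" by (simp add: vec_eq_iff)
  with assms show ?case by (simp add: sphere_proj_def)
next
  case (Suc t)
  define v where "v = reweight (1 + \<eta>) x (\<lambda>j. visits \<xi> \<omega> j t)"
  define k where "k = \<xi> t \<omega>"
  have "v \<noteq> 0" unfolding v_def using assms by (intro reweight_nonzero) auto
  have "sphere_proj v + (\<eta> * (sphere_proj v \<bullet> axis k 1)) *\<^sub>R axis k 1
        = (1 / norm v) *\<^sub>R (v + (\<eta> * v $ k) *\<^sub>R axis k 1)"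
    by (simp add: sphere_proj_def inner_axis algebra_simps)
  moreover have "v + (\<eta> * v $ k) *\<^sub>R axis k 1 = reweight (1 + \<eta>) x (\<lambda>j. visits \<xi> \<omega> j (Suc t))"
    by (simp add: v_def k_def vec_eq_iff visits_Suc axis_def algebra_simps)
  ultimately show ?case using Suc \<open>v \<noteq> 0\<close>
    by (simp add: hjmr_step_def sphere_proj_scaleR v_def k_def)
qed

lemma norm_normalize_diff_le:
  fixes a b :: "'v::real_normed_vector"
  assumes "a \<noteq> 0" "b \<noteq> 0"
  shows "norm ((1 / norm a) *\<^sub>R a - (1 / norm b) *\<^sub>R b) \<le> 2 * norm (a - b) / norm a"
proof -
  have na: "norm a > 0" and nb: "norm b > 0" using assms by auto
  have "1 / norm a - 1 / norm b = (norm b - norm a) / (norm a * norm b)"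
    using na nb by (simp add: field_simps)
  then have "(1 / norm a) *\<^sub>R a - (1 / norm b) *\<^sub>R b
      = (1 / norm a) *\<^sub>R (a - b) + ((norm b - norm a) / (norm a * norm b)) *\<^sub>R b"
    by (metis (no_types) diff_add_cancel scaleR_diff_left scaleR_diff_right add_diff_eq)
  then have "norm ((1 / norm a) *\<^sub>R a - (1 / norm b) *\<^sub>R b)
      \<le> norm ((1 / norm a) *\<^sub>R (a - b)) + norm (((norm b - norm a) / (norm a * norm b)) *\<^sub>R b)"
    by (metis norm_triangle_ineq)
  also have "\<dots> = norm (a - b) / norm a + \<bar>norm b - norm a\<bar> / norm a"
    using na nb by (simp add: abs_divide)
  also have "\<bar>norm b - norm a\<bar> \<le> norm (a - b)"
    using norm_triangle_ineq3[of b a] by (simp add: norm_minus_commute)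
  finally show ?thesis using na by (simp add: divide_right_mono)
qed

lemma support_nonempty: "norm x = 1 \<Longrightarrow> support x \<noteq> {}"
  unfolding support_def by (metis (mono_tags) Collect_empty_eq norm_zero vec_eq_iff zero_index zero_neq_one)

lemma sphere_proj_reweight_near_axis:
  fixes x :: "real ^ 'd"
  assumes q: "q \<ge> 1" and x: "norm x = 1" and m: "m > 0" "m \<le> \<bar>x $ k\<bar>"
    and gap: "\<And>j. j \<in> support x \<Longrightarrow> j \<noteq> k \<Longrightarrow> n j + K + 1 \<le> n k"
  shows "norm (sphere_proj (reweight q x n) - sgn (x $ k) *\<^sub>R axis k 1)
    \<le> 2 * real CARD('d) / (m * q ^ (K + 1))"
proof -
  define v where "v = reweight q x n"
  define b where "b = (v $ k) *\<^sub>R (axis k 1 :: real ^ 'd)"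
  have "x $ k \<noteq> 0" using m by auto
  with q have "v $ k \<noteq> 0" by (simp add: v_def)
  then have "v \<noteq> 0" "b \<noteq> 0" by (auto simp: b_def)
  have "(1 / norm b) *\<^sub>R b = sgn (x $ k) *\<^sub>R axis k 1"
    using q \<open>x $ k \<noteq> 0\<close> by (simp add: b_def v_def real_sgn_eq abs_mult)
  then have "norm (sphere_proj v - sgn (x $ k) *\<^sub>R axis k 1) \<le> 2 * norm (v - b) / norm v"
    using norm_normalize_diff_le[OF \<open>v \<noteq> 0\<close> \<open>b \<noteq> 0\<close>] by (simp add: sphere_proj_def)
  also have "\<dots> \<le> 2 * (CARD('d) * (q ^ n k / q ^ (K + 1))) / (q ^ n k * m)"
  proof (rule frac_le)
    have "\<bar>(v - b) $ i\<bar> \<le> q ^ n k / q ^ (K + 1)" for i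
    proof (cases "i = k \<or> x $ i = 0")
      case False
      then have "n i + (K + 1) \<le> n k" using gap by (auto simp: support_def)
      have "\<bar>(v - b) $ i\<bar> = q ^ n i * \<bar>x $ i\<bar>" using False q
        by (simp add: b_def v_def axis_def abs_mult)
      also have "\<dots> \<le> q ^ n i"
        using component_le_norm_cart[of x i] x q by (simp add: mult_left_le)
      also have "\<dots> = q ^ (n i + (K + 1)) / q ^ (K + 1)" using q by (simp add: power_add)
      also have "\<dots> \<le> q ^ n k / q ^ (K + 1)"
        using \<open>n i + (K + 1) \<le> n k\<close> q by (intro divide_right_mono power_increasing) auto
      finally show ?thesis .
    qed (use q in \<open>auto simp: b_def v_def axis_def\<close>)
    then have "(\<Sum>i\<in>UNIV. \<bar>(v - b) $ i\<bar>) \<le> (\<Sum>i\<in>(UNIV :: 'd set). q ^ n k / q ^ (K + 1))"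
      by (meson sum_mono)
    then have "norm (v - b) \<le> CARD('d) * (q ^ n k / q ^ (K + 1))"
      using norm_le_l1_cart[of "v - b"] by simp
    then show "2 * norm (v - b) \<le> 2 * (CARD('d) * (q ^ n k / q ^ (K + 1)))" by simp
    have "q ^ n k * m \<le> \<bar>v $ k\<bar>" using m q by (simp add: v_def abs_mult mult_left_mono)
    then show "q ^ n k * m \<le> norm v" using component_le_norm_cart[of v k] by linarith
  qed (use q m in auto)
  also have "\<dots> = 2 * real CARD('d) / (m * q ^ (K + 1))" using q m by (simp add: field_simps)
  finally show ?thesis unfolding v_def .
qed

lemma rho_P_nonneg: "rho_P z \<ge> 0"
  by (simp add: rho_P_def infdist_nonneg)

lemma polarized_setI: "norm x = 1 \<Longrightarrow> \<sigma> = -1 \<or> \<sigma> = 1 \<Longrightarrow> (x, \<sigma> *\<^sub>R x) \<in> polarized_set"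
  unfolding polarized_set_def by blast

lemma rho_P_le:
  assumes "norm x = 1" "\<sigma> = -1 \<or> \<sigma> = 1"
  shows "rho_P (x, y) \<le> norm (y - \<sigma> *\<^sub>R x)"
proof -
  have "rho_P (x, y) \<le> dist (x, y) (x, \<sigma> *\<^sub>R x)"
    unfolding rho_P_def by (rule infdist_le[OF polarized_setI[OF assms]])
  then show ?thesis by (simp add: dist_norm norm_Pair)
qed

lemma rho_P_le_norm_diff: "norm x = 1 \<Longrightarrow> rho_P (x, y) \<le> norm (x - y)"
  using rho_P_le[of x 1 y] by (simp add: norm_minus_commute)

lemma rho_P_le_norm_add: "norm x = 1 \<Longrightarrow> rho_P (x, y) \<le> norm (x + y)"
  using rho_P_le[of x "-1" y] by (simp add: add.commute)

lemma rho_P_le_near_axis: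
  assumes "norm x = 1" "\<bar>s\<bar> = 1" "\<bar>s'\<bar> = 1"
  shows "rho_P (x, y) \<le> norm (x - s *\<^sub>R e) + norm (y - s' *\<^sub>R e)"
proof -
  have "s * s = 1" using assms(2) abs_mult_self_eq[of s] by simp
  then have "(s * s') *\<^sub>R (x - s *\<^sub>R e) = (s * s') *\<^sub>R x - s' *\<^sub>R e"
    by (simp add: scaleR_diff_right mult.commute mult.left_commute)
  then have "y - (s * s') *\<^sub>R x = (y - s' *\<^sub>R e) - (s * s') *\<^sub>R (x - s *\<^sub>R e)"
    by simp
  moreover have "s * s' = -1 \<or> s * s' = 1"
    using assms(2,3) by (auto simp: abs_mult[symmetric] abs_eq_iff')
  ultimately have "rho_P (x, y) \<le> norm ((y - s' *\<^sub>R e) - (s * s') *\<^sub>R (x - s *\<^sub>R e))"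
    using rho_P_le[OF assms(1)] by metis
  also have "\<dots> \<le> norm (y - s' *\<^sub>R e) + norm ((s * s') *\<^sub>R (x - s *\<^sub>R e))"
    by (rule norm_triangle_ineq4)
  also have "norm ((s * s') *\<^sub>R (x - s *\<^sub>R e)) = norm (x - s *\<^sub>R e)"
    using assms(2,3) by (simp add: abs_mult)
  finally show ?thesis by simp
qed

definition minor :: "real ^ 'd \<Rightarrow> real ^ 'd \<Rightarrow> 'd \<Rightarrow> 'd \<Rightarrow> real" where
  "minor x y j k = x $ j * y $ k - x $ k * y $ j"

lemma abs_minor_le_rho_P:
  fixes x y :: "real ^ 'd"
  assumes "norm x = 1" "norm y = 1"
  shows "\<bar>minor x y j k\<bar> \<le> 4 * rho_P (x, y)"
proof (rule field_le_epsilon)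
  fix e :: real assume "e > 0"
  have "polarized_set \<noteq> ({} :: ((real ^ 'd) \<times> (real ^ 'd)) set)"
    using polarized_setI[OF assms(1), of 1] by blast
  then have "Inf (dist (x, y) ` polarized_set) < rho_P (x, y) + e / 4"
    using \<open>e > 0\<close> by (simp add: rho_P_def infdist_notempty)
  then have "\<exists>d\<in>dist (x, y) ` polarized_set. d < rho_P (x, y) + e / 4"
    using \<open>polarized_set \<noteq> {}\<close> by (intro cInf_lessD) auto
  then obtain p where "p \<in> polarized_set" "dist (x, y) p < rho_P (x, y) + e / 4"
    by blast
  then obtain z \<sigma> where p: "p = (z, \<sigma> *\<^sub>R z)" "\<sigma> = -1 \<or> \<sigma> = 1"
    unfolding polarized_set_def by blast
  define w where "w = y - \<sigma> *\<^sub>R x"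
  have "w = (y - \<sigma> *\<^sub>R z) + \<sigma> *\<^sub>R (z - x)"
    unfolding w_def by (simp add: algebra_simps)
  then have "norm w \<le> norm (y - \<sigma> *\<^sub>R z) + norm (\<sigma> *\<^sub>R (z - x))"
    by (metis norm_triangle_ineq)
  also have "norm (\<sigma> *\<^sub>R (z - x)) = norm (x - z)"
    using p(2) by (auto simp: norm_minus_commute)
  also have "norm (y - \<sigma> *\<^sub>R z) + norm (x - z) \<le> 2 * dist (x, y) p"
    using p(1) norm_fst_le[of "x - z" "y - \<sigma> *\<^sub>R z"] norm_snd_le[of "y - \<sigma> *\<^sub>R z" "x - z"]
    by (simp add: dist_norm)
  finally have w: "norm w \<le> 2 * rho_P (x, y) + e / 2"
    using \<open>dist (x, y) p < rho_P (x, y) + e / 4\<close> by linarith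
  have "minor x y j k = x $ j * w $ k - x $ k * w $ j"
    by (simp add: minor_def w_def algebra_simps)
  also have "\<bar>\<dots>\<bar> \<le> \<bar>x $ j\<bar> * \<bar>w $ k\<bar> + \<bar>x $ k\<bar> * \<bar>w $ j\<bar>"
    using abs_triangle_ineq4[of "x $ j * w $ k" "x $ k * w $ j"] by (simp add: abs_mult)
  also have "\<dots> \<le> 1 * norm w + 1 * norm w"
    using component_le_norm_cart[of x j] component_le_norm_cart[of x k]
      component_le_norm_cart[of w j] component_le_norm_cart[of w k] assms(1)
    by (intro add_mono mult_mono) auto
  finally show "\<bar>minor x y j k\<bar> \<le> 4 * rho_P (x, y) + e" using w by linarith
qed

lemma minor_sphere_proj_reweight:
  assumes "reweight q x n \<noteq> 0" "reweight q y n \<noteq> 0"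
  shows "minor (sphere_proj (reweight q x n)) (sphere_proj (reweight q y n)) j k
       = q ^ (n j + n k) * minor x y j k / (norm (reweight q x n) * norm (reweight q y n))"
  using assms by (simp add: minor_def sphere_proj_def power_add field_simps)

lemma norm_reweight_le:
  assumes "q \<ge> 1" "norm x = 1" "\<And>j. j \<in> support x \<Longrightarrow> n j \<le> N"
  shows "norm (reweight q x n) \<le> q ^ N"
proof -
  have "norm (reweight q x n) \<le> norm (q ^ N *\<^sub>R x)"
  proof (rule norm_le_componentwise_cart)
    fix j
    have "q ^ n j * \<bar>x $ j\<bar> \<le> q ^ N * \<bar>x $ j\<bar>"
      using assms by (cases "j \<in> support x") (auto simp: support_def intro: mult_right_mono power_increasing)
    then show "norm (reweight q x n $ j) \<le> norm ((q ^ N *\<^sub>R x) $ j)"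
      using assms(1) by (simp add: abs_mult)
  qed
  then show ?thesis using assms by simp
qed

definition falls_behind :: "(nat \<Rightarrow> 'd \<Rightarrow> nat) \<Rightarrow> 'd \<Rightarrow> bool" where
  "falls_behind n b \<longleftrightarrow> (\<forall>L. \<forall>\<^sub>F t in sequentially. \<exists>a. n t b + L \<le> n t a)"

lemma falls_behind_time_shift: "falls_behind (\<lambda>t. n (m + t)) b \<longleftrightarrow> falls_behind n b"
  unfolding falls_behind_def using eventually_sequentially_seg[of "\<lambda>t. \<exists>a. n t b + _ \<le> n t a" m]
  by (simp add: add.commute)

lemma falls_behind_offset:
  fixes n :: "nat \<Rightarrow> 'd::finite \<Rightarrow> nat"
  shows "falls_behind (\<lambda>t j. c j + n t j) b \<longleftrightarrow> falls_behind n b"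
proof -
  define C where "C = Max (range c)"
  have c: "c j \<le> C" for j by (simp add: C_def)
  have bwd: "n t b + L \<le> n t a" if "c b + n t b + (L + C) \<le> c a + n t a" for t a L
    using that c[of a] by linarith
  have fwd: "c b + n t b + L \<le> c a + n t a" if "n t b + (L + C) \<le> n t a" for t a L
    using that c[of b] by linarith
  have "(\<forall>L. \<forall>\<^sub>F t in sequentially. \<exists>a. c b + n t b + L \<le> c a + n t a)
    \<longleftrightarrow> (\<forall>L. \<forall>\<^sub>F t in sequentially. \<exists>a. n t b + L \<le> n t a)"
  proof (intro iffI allI)
    fix L
    assume "\<forall>L. \<forall>\<^sub>F t in sequentially. \<exists>a. c b + n t b + L \<le> c a + n t a"
    then have "\<forall>\<^sub>F t in sequentially. \<exists>a. c b + n t b + (L + C) \<le> c a + n t a" ..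
    then show "\<forall>\<^sub>F t in sequentially. \<exists>a. n t b + L \<le> n t a"
      by (rule eventually_mono) (use bwd in blast)
  next
    fix L
    assume "\<forall>L. \<forall>\<^sub>F t in sequentially. \<exists>a. n t b + L \<le> n t a"
    then have "\<forall>\<^sub>F t in sequentially. \<exists>a. n t b + (L + C) \<le> n t a" ..
    then show "\<forall>\<^sub>F t in sequentially. \<exists>a. c b + n t b + L \<le> c a + n t a"
      by (rule eventually_mono) (use fwd in blast)
  qed
  then show ?thesis unfolding falls_behind_def .
qed

lemma exists_distinct_ratios:
  fixes x y :: "real ^ 'd"
  assumes "norm x = 1" "norm y = 1" "support x = support y" "x \<noteq> y" "x \<noteq> - y"
  shows "\<exists>a\<in>support x. \<exists>b\<in>support x. y $ a / x $ a \<noteq> y $ b / x $ b"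
proof (rule ccontr)
  assume const: "\<not> ?thesis"
  obtain i where i: "i \<in> support x" using support_nonempty[OF assms(1)] by blast
  define c where "c = y $ i / x $ i"
  have "y $ j = c * x $ j" for j
  proof (cases "j \<in> support x")
    case True
    then have "y $ j / x $ j = c" using const i unfolding c_def by blast
    with True show ?thesis by (simp add: support_def field_simps)
  next
    case False
    then have "y $ j = 0" using assms(3) unfolding support_def by (metis mem_Collect_eq)
    with False show ?thesis by (simp add: support_def)
  qed
  then have "y = c *\<^sub>R x" by (simp add: vec_eq_iff)
  then have "\<bar>c\<bar> = 1" using assms(1,2) by simp
  then have "c = 1 \<or> c = -1" by linarith
  then show False using \<open>y = c *\<^sub>R x\<close> assms(4,5) by auto
qed

lemma reweight_minor_small_imp_gap:
  fixes x y :: "real ^ 'd"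
  assumes q: "q > 1" and x: "norm x = 1" and y: "norm y = 1" and supp: "support y = support x"
    and D: "minor x y j k \<noteq> 0"
    and small: "\<bar>minor (sphere_proj (reweight q x n)) (sphere_proj (reweight q y n)) j k\<bar>
                  < \<bar>minor x y j k\<bar> / q ^ L"
  shows "n j + n k + L < 2 * Max (n ` support x)"
proof -
  define N where "N = Max (n ` support x)"
  have le_N: "n i \<le> N" if "i \<in> support x" for i using that by (simp add: N_def)
  have vx: "reweight q x n \<noteq> 0" and vy: "reweight q y n \<noteq> 0"
    using reweight_nonzero[of q x n] reweight_nonzero[of q y n] q x y by fastforce+
  have "q ^ (n j + n k) * \<bar>minor x y j k\<bar> / (q ^ N * q ^ N)
      \<le> q ^ (n j + n k) * \<bar>minor x y j k\<bar> / (norm (reweight q x n) * norm (reweight q y n))"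
    using q vx vy norm_reweight_le[of q x n N] norm_reweight_le[of q y n N] le_N supp x y
    by (intro divide_left_mono mult_mono) auto
  also have "\<dots> < \<bar>minor x y j k\<bar> / q ^ L"
    using small q vx vy by (simp add: minor_sphere_proj_reweight abs_mult abs_divide)
  finally have "q ^ (n j + n k + L) < q ^ (N + N)"
    using q D by (simp add: power_add field_simps)
  then show ?thesis using q by (simp add: N_def mult_2 power_less_imp_less_exp)
qed

text \<open>The gap forbids the running maximum, which grows by at most one per step, from
  passing between two classes of \<open>r\<close>; so after some time it stays in one class, and every
  index outside that class falls behind.\<close>
lemma falls_behind_if_gap_between_classes:
  fixes n :: "nat \<Rightarrow> 'd \<Rightarrow> nat" and r :: "'d \<Rightarrow> 'b"
  assumes S: "finite S" "a \<in> S" "b \<in> S" "r a \<noteq> r b"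
    and mono: "\<And>t j. n t j \<le> n (Suc t) j" and incr: "\<And>t j. n (Suc t) j \<le> n t j + 1"
    and gap: "\<And>L. \<forall>\<^sub>F t in sequentially.
                \<forall>j\<in>S. \<forall>k\<in>S. r j \<noteq> r k \<longrightarrow> n t j + n t k + L < 2 * Max (n t ` S)"
  shows "\<exists>b. falls_behind n b"
proof -
  define M where "M t = Max (n t ` S)" for t
  have le_M: "n t j \<le> M t" if "j \<in> S" for t j using that S(1) by (simp add: M_def)
  have argmax: "\<exists>a\<in>S. n t a = M t" for t
  proof -
    have "M t \<in> n t ` S" unfolding M_def using S(1,2) by (intro Max_in) auto
    then show ?thesis by auto
  qed
  obtain T0 where T0: "\<And>t j k. t \<ge> T0 \<Longrightarrow> j \<in> S \<Longrightarrow> k \<in> S \<Longrightarrow> r j \<noteq> r k \<Longrightarrow> n t j + n t k + 3 < 2 * M t"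
    using gap[of 3] unfolding eventually_sequentially M_def by blast
  obtain a0 where "a0 \<in> S" "n T0 a0 = M T0" using argmax by blast
  have stays: "\<exists>a\<in>S. r a = r a0 \<and> n t a = M t" if "t \<ge> T0" for t
    using that
  proof (induction t rule: dec_induct)
    case base
    then show ?case using \<open>a0 \<in> S\<close> \<open>n T0 a0 = M T0\<close> by blast
  next
    case (step t)
    then obtain a where a: "a \<in> S" "r a = r a0" "n t a = M t" by blast
    obtain a' where a': "a' \<in> S" "n (Suc t) a' = M (Suc t)" using argmax by blast
    have "M (Suc t) \<le> M t + 1" using a' incr[of t a'] le_M[of a' t] by simp
    moreover have "M t \<le> n (Suc t) a" using a mono[of t a] by simp
    ultimately have "\<not> n (Suc t) a + n (Suc t) a' + 3 < 2 * M (Suc t)"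
      using a'(2) by linarith
    then have "r a = r a'"
      using T0[of "Suc t" a a'] step.hyps a(1) a'(1) by linarith
    then show ?case using a a' by auto
  qed
  obtain b' where b': "b' \<in> S" "r b' \<noteq> r a0" using S by metis
  have "falls_behind n b'"
    unfolding falls_behind_def
  proof
    fix L
    show "\<forall>\<^sub>F t in sequentially. \<exists>a. n t b' + L \<le> n t a"
      using gap[of L] eventually_ge_at_top[of T0]
    proof eventually_elim
      case (elim t)
      then obtain a where "a \<in> S" "r a = r a0" "n t a = M t" using stays by blast
      then have "n t a + n t b' + L < 2 * n t a" using elim(1) b' by (auto simp: M_def)
      then show ?case by (auto intro: less_imp_le)
    qed
  qed
  then show ?thesis ..
qed

lemma falls_behind_if_minors_vanish:
  fixes x y :: "real ^ 'd::finite" and n :: "nat \<Rightarrow> 'd \<Rightarrow> nat"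
  assumes q: "q > 1" and x: "norm x = 1" and y: "norm y = 1" and supp: "support x = support y"
    and "x \<noteq> y" "x \<noteq> - y"
    and mono: "\<And>t j. n t j \<le> n (Suc t) j" and incr: "\<And>t j. n (Suc t) j \<le> n t j + 1"
    and minors: "\<And>j k. (\<lambda>t. minor (sphere_proj (reweight q x (n t))) (sphere_proj (reweight q y (n t))) j k)
                   \<longlonglongrightarrow> 0"
  shows "\<exists>b. falls_behind n b"
proof -
  define r where "r j = y $ j / x $ j" for j
  obtain a b where ab: "a \<in> support x" "b \<in> support x" "r a \<noteq> r b"
    using exists_distinct_ratios[OF x y supp \<open>x \<noteq> y\<close> \<open>x \<noteq> - y\<close>] unfolding r_def by blast
  have D: "minor x y j k \<noteq> 0" if "j \<in> support x" "k \<in> support x" "r j \<noteq> r k" for j k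
    using that by (auto simp: minor_def r_def support_def field_simps)
  have "\<forall>\<^sub>F t in sequentially. n t j + n t k + L < 2 * Max (n t ` support x)"
    if "j \<in> support x" "k \<in> support x" "r j \<noteq> r k" for j k L
  proof -
    have "\<bar>minor x y j k\<bar> / q ^ L > 0" using D[OF that] q by simp
    with tendsto_rabs_zero[OF minors[of j k]]
    have "\<forall>\<^sub>F t in sequentially. \<bar>minor (sphere_proj (reweight q x (n t))) (sphere_proj (reweight q y (n t))) j k\<bar>
        < \<bar>minor x y j k\<bar> / q ^ L"
      by (rule order_tendstoD(2))
    then show ?thesis
      by (rule eventually_mono) (rule reweight_minor_small_imp_gap[OF q x y supp[symmetric] D[OF that]])
  qed
  then have "\<forall>\<^sub>F t in sequentially. \<forall>j\<in>support x. \<forall>k\<in>support x.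
      r j \<noteq> r k \<longrightarrow> n t j + n t k + L < 2 * Max (n t ` support x)" for L
    by (simp add: eventually_ball_finite_distrib)
  then show ?thesis
    using falls_behind_if_gap_between_classes[of "support x" a b r n, OF _ ab mono incr] by simp
qed

lemma borel_measurable_visits:
  assumes "\<And>s. \<xi> s \<in> N \<rightarrow>\<^sub>M count_space UNIV"
  shows "(\<lambda>\<omega>. real (visits \<xi> \<omega> j t)) \<in> borel_measurable N"
  unfolding visits_eq_sum using assms by measurable

lemma pred_visits_le:
  assumes "\<And>s. \<xi> s \<in> N \<rightarrow>\<^sub>M count_space UNIV"
  shows "Measurable.pred N (\<lambda>\<omega>. visits \<xi> \<omega> k t + L \<le> visits \<xi> \<omega> a t)"
proof -
  have "Measurable.pred N (\<lambda>\<omega>. real (visits \<xi> \<omega> k t) + real L \<le> real (visits \<xi> \<omega> a t))"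
    using borel_measurable_visits[OF assms] by measurable
  then show ?thesis by (simp flip: of_nat_add)
qed

lemma pred_falls_behind:
  fixes \<xi> :: "nat \<Rightarrow> 'a \<Rightarrow> 'd::finite"
  assumes "\<And>s. \<xi> s \<in> N \<rightarrow>\<^sub>M count_space UNIV"
  shows "Measurable.pred N (\<lambda>\<omega>. falls_behind (\<lambda>t j. visits \<xi> \<omega> j t) b)"
  unfolding falls_behind_def using pred_visits_le[OF assms] by measurable

lemma falls_behind_visits_shift:
  fixes \<xi> :: "nat \<Rightarrow> 'a \<Rightarrow> 'd::finite"
  shows "falls_behind (\<lambda>t j. visits \<xi> \<omega> j t) b
    \<longleftrightarrow> falls_behind (\<lambda>t j. visits (\<lambda>s. \<xi> (m + s)) \<omega> j t) b"
  using falls_behind_time_shift[of "\<lambda>t j. visits \<xi> \<omega> j t" m b]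
    falls_behind_offset[of "\<lambda>j. visits \<xi> \<omega> j m" "\<lambda>t j. visits (\<lambda>s. \<xi> (m + s)) \<omega> j t" b]
  by (simp add: visits_shift)

locale iid_uniform = prob_space M for M :: "'a measure" +
  fixes \<xi> :: "nat \<Rightarrow> 'a \<Rightarrow> 'd::finite"
  assumes indep: "indep_vars (\<lambda>_. count_space UNIV) \<xi> UNIV"
    and uniform: "\<And>t k. prob {\<omega> \<in> space M. \<xi> t \<omega> = k} = 1 / real CARD('d)"
begin

lemma measurable_xi [measurable]: "\<xi> t \<in> M \<rightarrow>\<^sub>M count_space UNIV"
  using indep unfolding indep_vars_def by auto

lemma pred_visits_le_visits [measurable]: "Measurable.pred M (\<lambda>\<omega>. visits \<xi> \<omega> j t \<le> visits \<xi> \<omega> c t)"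
  using pred_visits_le[OF measurable_xi, where L = 0] by simp

lemma pred_visits_less_visits [measurable]: "Measurable.pred M (\<lambda>\<omega>. visits \<xi> \<omega> j t < visits \<xi> \<omega> c t)"
proof -
  have "Measurable.pred M (\<lambda>\<omega>. \<not> visits \<xi> \<omega> c t \<le> visits \<xi> \<omega> j t)"
    by measurable
  then show ?thesis by (simp add: not_le)
qed

text \<open>Falling behind is a tail event: shifting the origin of time changes every count by
  a bounded amount.\<close>
lemma prob_falls_behind_0_1:
  "prob {\<omega> \<in> space M. falls_behind (\<lambda>t j. visits \<xi> \<omega> j t) b} = 0
   \<or> prob {\<omega> \<in> space M. falls_behind (\<lambda>t j. visits \<xi> \<omega> j t) b} = 1"
proof (rule kolmogorov_0_1_law)
  define G where "G m = sigma_sets (space M) {\<xi> m -` A \<inter> space M | A. A \<in> sets (count_space UNIV)}" for m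
  have G_gen: "{\<xi> m -` A \<inter> space M | A. A \<in> sets (count_space UNIV)} \<subseteq> Pow (space M)" for m
    by auto
  show "sigma_algebra (space M) (G m)" for m
    unfolding G_def by (rule sigma_algebra_sigma_sets[OF G_gen])
  show "indep_sets G UNIV"
    using indep unfolding indep_vars_def G_def by auto
  show "{\<omega> \<in> space M. falls_behind (\<lambda>t j. visits \<xi> \<omega> j t) b} \<in> tail_events G"
    unfolding tail_events_def
  proof (intro InterI, clarify)
    fix m
    define U where "U = \<Union> (G ` {m..})"
    have U: "U \<subseteq> Pow (space M)"
      unfolding U_def G_def using sigma_sets_into_sp[OF G_gen] by blast
    define N where "N = sigma (space M) U"
    have sets_N: "sets N = sigma_sets (space M) U" and space_N: "space N = space M"
      unfolding N_def using U by (simp_all add: sets_measure_of space_measure_of)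
    have "(\<lambda>s. \<xi> (m + s)) s \<in> N \<rightarrow>\<^sub>M count_space UNIV" for s
    proof (rule measurableI)
      fix A :: "'d set"
      have "\<xi> (m + s) -` A \<inter> space M \<in> G (m + s)"
        unfolding G_def by (rule sigma_sets.Basic) auto
      then have "\<xi> (m + s) -` A \<inter> space M \<in> U"
        unfolding U_def by auto
      then show "(\<lambda>s. \<xi> (m + s)) s -` A \<inter> space N \<in> sets N"
        unfolding sets_N space_N by (auto intro: sigma_sets.Basic)
    qed auto
    then have "{\<omega> \<in> space N. falls_behind (\<lambda>t j. visits (\<lambda>s. \<xi> (m + s)) \<omega> j t) b} \<in> sets N"
      using pred_falls_behind by measurable
    then show "{\<omega> \<in> space M. falls_behind (\<lambda>t j. visits \<xi> \<omega> j t) b} \<in> sigma_sets (space M) (\<Union> (G ` {m..}))"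
      unfolding sets_N space_N U_def by (simp flip: falls_behind_visits_shift)
  qed
qed

lemma distr_xi_eq: "distr M (count_space UNIV) (\<lambda>\<omega>. f (\<xi> s \<omega>)) = distr M (count_space UNIV) (\<xi> t)"
  if "bij f"
proof (rule measure_eqI_countable[where A = UNIV])
  fix x
  have "{\<omega> \<in> space M. f (\<xi> s \<omega>) = x} = {\<omega> \<in> space M. \<xi> s \<omega> = inv f x}"
    using that by (auto simp: bij_inv_eq_iff)
  moreover have "g -` {x} \<inter> space M = {\<omega> \<in> space M. g \<omega> = x}" for g :: "'a \<Rightarrow> 'd"
    by auto
  ultimately show "emeasure (distr M (count_space UNIV) (\<lambda>\<omega>. f (\<xi> s \<omega>))) {x}
      = emeasure (distr M (count_space UNIV) (\<xi> t)) {x}"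
    using uniform by (simp add: emeasure_distr emeasure_eq_measure)
qed auto

lemma distr_tuple_bij_eq:
  assumes "bij f" "I \<noteq> {}"
  shows "distr M (\<Pi>\<^sub>M s\<in>I. count_space UNIV) (\<lambda>\<omega>. \<lambda>s\<in>I. f (\<xi> s \<omega>))
       = distr M (\<Pi>\<^sub>M s\<in>I. count_space UNIV) (\<lambda>\<omega>. \<lambda>s\<in>I. \<xi> s \<omega>)"
proof -
  have indep_I: "indep_vars (\<lambda>_. count_space UNIV) \<xi> I"
    using indep by (rule indep_vars_subset) auto
  then have "indep_vars (\<lambda>_. count_space UNIV) (\<lambda>s \<omega>. f (\<xi> s \<omega>)) I"
    by (rule indep_vars_compose2[where Y = "\<lambda>_. f"]) auto
  then have "distr M (\<Pi>\<^sub>M s\<in>I. count_space UNIV) (\<lambda>\<omega>. \<lambda>s\<in>I. f (\<xi> s \<omega>))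
      = (\<Pi>\<^sub>M s\<in>I. distr M (count_space UNIV) (\<lambda>\<omega>. f (\<xi> s \<omega>)))"
    using assms(2) by (subst (asm) indep_vars_iff_distr_eq_PiM') auto
  also have "\<dots> = (\<Pi>\<^sub>M s\<in>I. distr M (count_space UNIV) (\<xi> s))"
  proof -
    have "distr M (count_space UNIV) (\<lambda>\<omega>. f (\<xi> s \<omega>)) = distr M (count_space UNIV) (\<xi> s)" for s
      using distr_xi_eq[OF assms(1)] .
    then show ?thesis by simp
  qed
  also have "\<dots> = distr M (\<Pi>\<^sub>M s\<in>I. count_space UNIV) (\<lambda>\<omega>. \<lambda>s\<in>I. \<xi> s \<omega>)"
    using indep_I assms(2) by (subst (asm) indep_vars_iff_distr_eq_PiM') auto
  finally show ?thesis .
qed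

text \<open>Exchanging the labels \<open>b\<close> and \<open>c\<close> preserves the law of \<open>\<xi>\<close>.\<close>
lemma prob_visits_max_eq:
  "prob {\<omega> \<in> space M. \<forall>j. visits \<xi> \<omega> j t \<le> visits \<xi> \<omega> b t}
 = prob {\<omega> \<in> space M. \<forall>j. visits \<xi> \<omega> j t \<le> visits \<xi> \<omega> c t}"
proof -
  define f where "f = Transposition.transpose b c"
  define P where "P = (\<Pi>\<^sub>M s\<in>{..t}. count_space (UNIV :: 'd set))"
  define E where "E = {h \<in> space P. \<forall>j. visits (\<lambda>s h. h s) h j t \<le> visits (\<lambda>s h. h s) h c t}"
  have "P = count_space (\<Pi>\<^sub>E s\<in>{..t}. UNIV)"
    unfolding P_def by (rule count_space_PiM_finite) auto
  then have E: "E \<in> sets P" by (simp add: E_def)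
  have "bij f" by (simp add: f_def)
  have f_eq_iff: "f a = j \<longleftrightarrow> a = f j" for a j
    unfolding f_def by (metis transpose_involutory)
  have visits_restrict_f: "visits (\<lambda>s h. h s) (\<lambda>s\<in>{..t}. f (\<xi> s \<omega>)) j t = visits \<xi> \<omega> (f j) t" for \<omega> j
    unfolding visits_def by (rule arg_cong[where f = card]) (auto simp: f_eq_iff)
  have visits_restrict: "visits (\<lambda>s h. h s) (\<lambda>s\<in>{..t}. \<xi> s \<omega>) j t = visits \<xi> \<omega> j t" for \<omega> j
    unfolding visits_def by (rule arg_cong[where f = card]) auto
  have "(\<forall>j. visits \<xi> \<omega> (f j) t \<le> visits \<xi> \<omega> (f c) t) \<longleftrightarrow> (\<forall>j. visits \<xi> \<omega> j t \<le> visits \<xi> \<omega> b t)" for \<omega>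
    unfolding f_def by (metis transpose_apply_second transpose_involutory)
  then have "prob {\<omega> \<in> space M. \<forall>j. visits \<xi> \<omega> j t \<le> visits \<xi> \<omega> b t}
      = measure (distr M P (\<lambda>\<omega>. \<lambda>s\<in>{..t}. f (\<xi> s \<omega>))) E"
    using E by (subst measure_distr) (auto simp: P_def E_def visits_restrict_f space_PiM
        intro!: measurable_restrict arg_cong[where f = prob])
  also have "\<dots> = measure (distr M P (\<lambda>\<omega>. \<lambda>s\<in>{..t}. \<xi> s \<omega>)) E"
    unfolding P_def using \<open>bij f\<close> by (subst distr_tuple_bij_eq) auto
  also have "\<dots> = prob {\<omega> \<in> space M. \<forall>j. visits \<xi> \<omega> j t \<le> visits \<xi> \<omega> c t}"
    using E by (subst measure_distr) (auto simp: P_def E_def visits_restrict space_PiM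
        intro!: measurable_restrict arg_cong[where f = prob])
  finally show ?thesis .
qed

lemma prob_visits_max_ge: "prob {\<omega> \<in> space M. \<forall>j. visits \<xi> \<omega> j t \<le> visits \<xi> \<omega> b t} \<ge> 1 / CARD('d)"
proof -
  let ?Max = "\<lambda>c. {\<omega> \<in> space M. \<forall>j. visits \<xi> \<omega> j t \<le> visits \<xi> \<omega> c t}"
  have Max_sets: "?Max c \<in> events" for c
    by measurable
  have "space M \<subseteq> (\<Union>c. ?Max c)"
  proof
    fix \<omega> assume "\<omega> \<in> space M"
    have "Max (range (\<lambda>j. visits \<xi> \<omega> j t)) \<in> range (\<lambda>j. visits \<xi> \<omega> j t)"
      by (intro Max_in) auto
    then obtain c where "visits \<xi> \<omega> c t = Max (range (\<lambda>j. visits \<xi> \<omega> j t))"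
      by (metis rangeE)
    then have "\<forall>j. visits \<xi> \<omega> j t \<le> visits \<xi> \<omega> c t" by simp
    then show "\<omega> \<in> (\<Union>c. ?Max c)" using \<open>\<omega> \<in> space M\<close> by auto
  qed
  then have "prob (space M) \<le> prob (\<Union>c. ?Max c)"
    using Max_sets by (intro finite_measure_mono) auto
  also have "\<dots> \<le> (\<Sum>c\<in>UNIV. prob (?Max c))"
    using Max_sets by (intro finite_measure_subadditive_finite) auto
  also have "\<dots> = (\<Sum>c\<in>(UNIV :: 'd set). prob (?Max b))"
    by (rule sum.cong[OF refl]) (rule prob_visits_max_eq)
  also have "\<dots> = CARD('d) * prob (?Max b)"
    by simp
  finally show ?thesis by (simp add: prob_space field_simps)
qed

lemma prob_eventually_trails_le:
  "prob {\<omega> \<in> space M. \<exists>T. \<forall>t\<ge>T. \<exists>a. visits \<xi> \<omega> b t < visits \<xi> \<omega> a t} \<le> 1 - 1 / CARD('d)"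
proof -
  define H where "H T = {\<omega> \<in> space M. \<forall>t\<ge>T. \<exists>a. visits \<xi> \<omega> b t < visits \<xi> \<omega> a t}" for T
  define Lead where "Lead T = {\<omega> \<in> space M. \<forall>j. visits \<xi> \<omega> j T \<le> visits \<xi> \<omega> b T}" for T
  have H_sets: "H T \<in> events" and Lead_sets: "Lead T \<in> events" for T
    unfolding H_def Lead_def by measurable
  have "prob (H T) \<le> 1 - 1 / CARD('d)" for T
  proof -
    have "H T \<subseteq> space M - Lead T"
    proof
      fix \<omega> assume "\<omega> \<in> H T"
      then obtain a where "\<omega> \<in> space M" "visits \<xi> \<omega> b T < visits \<xi> \<omega> a T"
        unfolding H_def by blast
      moreover from this(2) have "\<not> visits \<xi> \<omega> a T \<le> visits \<xi> \<omega> b T" by simp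
      ultimately show "\<omega> \<in> space M - Lead T" unfolding Lead_def by blast
    qed
    then have "prob (H T) \<le> prob (space M - Lead T)"
      using Lead_sets by (intro finite_measure_mono) auto
    also have "\<dots> = 1 - prob (Lead T)"
      using Lead_sets by (rule prob_compl)
    also have "\<dots> \<le> 1 - 1 / CARD('d)"
      unfolding Lead_def using prob_visits_max_ge by (rule diff_left_mono)
    finally show ?thesis .
  qed
  moreover have "(\<lambda>T. prob (H T)) \<longlonglongrightarrow> prob (\<Union>T. H T)"
  proof (rule finite_Lim_measure_incseq)
    show "incseq H"
      unfolding H_def by (rule incseq_SucI) (use Suc_leD in blast)
  qed (use H_sets in auto)
  ultimately have "prob (\<Union>T. H T) \<le> 1 - 1 / CARD('d)"
    by (intro LIMSEQ_le_const2) auto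
  moreover have "(\<Union>T. H T) = {\<omega> \<in> space M. \<exists>T. \<forall>t\<ge>T. \<exists>a. visits \<xi> \<omega> b t < visits \<xi> \<omega> a t}"
    unfolding H_def by blast
  ultimately show ?thesis by simp
qed

lemma AE_not_falls_behind: "AE \<omega> in M. \<not> falls_behind (\<lambda>t j. visits \<xi> \<omega> j t) b"
proof -
  define A where "A = {\<omega> \<in> space M. falls_behind (\<lambda>t j. visits \<xi> \<omega> j t) b}"
  have A_sets: "A \<in> events"
    unfolding A_def using pred_falls_behind[OF measurable_xi] by measurable
  have "A \<subseteq> {\<omega> \<in> space M. \<exists>T. \<forall>t\<ge>T. \<exists>a. visits \<xi> \<omega> b t < visits \<xi> \<omega> a t}"
  proof
    fix \<omega> assume "\<omega> \<in> A"
    then have "\<omega> \<in> space M" "\<forall>\<^sub>F t in sequentially. \<exists>a. visits \<xi> \<omega> b t + 1 \<le> visits \<xi> \<omega> a t"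
      unfolding A_def falls_behind_def by blast+
    then show "\<omega> \<in> {\<omega> \<in> space M. \<exists>T. \<forall>t\<ge>T. \<exists>a. visits \<xi> \<omega> b t < visits \<xi> \<omega> a t}"
      unfolding eventually_sequentially by (simp add: Suc_le_eq)
  qed
  then have "prob A \<le> prob {\<omega> \<in> space M. \<exists>T. \<forall>t\<ge>T. \<exists>a. visits \<xi> \<omega> b t < visits \<xi> \<omega> a t}"
    by (intro finite_measure_mono) measurable
  then have "prob A \<le> 1 - 1 / CARD('d)"
    using prob_eventually_trails_le by (rule order.trans)
  then have "prob A = 0"
    using prob_falls_behind_0_1[of b] unfolding A_def by (auto simp: field_simps)
  then have "AE \<omega> in M. \<omega> \<notin> A"
    using A_sets by (simp add: prob_eq_0)
  then show ?thesis
    using AE_space by eventually_elim (auto simp: A_def)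
qed

end

lemma isCont_cdf_std_normal: "isCont (cdf std_normal_distribution) x"
proof -
  interpret real_distribution std_normal_distribution by (rule real_dist_normal_dist)
  have "emeasure std_normal_distribution {x} = 0"
    by (subst emeasure_density) (auto intro!: nn_integral_null_set)
  then show ?thesis by (simp add: isCont_cdf measure_def)
qed

lemma exists_std_normal_window_less:
  assumes "r > 0"
  obtains \<delta> where "\<delta> > 0" "cdf std_normal_distribution \<delta> - cdf std_normal_distribution (- \<delta>) < r"
proof -
  let ?\<Phi> = "cdf std_normal_distribution"
  have "(\<lambda>\<delta>. ?\<Phi> \<delta> - ?\<Phi> (- \<delta>)) \<midarrow>0\<rightarrow> ?\<Phi> 0 - ?\<Phi> (- 0)"
    using isCont_cdf_std_normal[of 0] unfolding isCont_def
    by (intro tendsto_diff tendsto_compose[OF _ tendsto_minus[OF tendsto_ident_at]]) auto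
  then have "\<forall>\<^sub>F \<delta> in at 0. ?\<Phi> \<delta> - ?\<Phi> (- \<delta>) < r"
    using assms by (intro order_tendstoD(2)) auto
  then obtain d where "d > 0" and d: "\<And>\<delta>. \<delta> \<noteq> 0 \<Longrightarrow> dist \<delta> 0 < d \<Longrightarrow> ?\<Phi> \<delta> - ?\<Phi> (- \<delta>) < r"
    unfolding eventually_at by blast
  then have "d / 2 > 0" "?\<Phi> (d / 2) - ?\<Phi> (- (d / 2)) < r"
    by (auto intro!: d)
  then show ?thesis by (rule that)
qed

lemma (in prob_space) tendsto_prob_normalized_sum_le:
  fixes Y :: "nat \<Rightarrow> 'a \<Rightarrow> real"
  assumes indep: "indep_vars (\<lambda>_. borel) Y UNIV"
    and mean: "\<And>i. expectation (Y i) = 0" and "\<sigma> > 0"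
    and square: "\<And>i. integrable M (\<lambda>\<omega>. (Y i \<omega>)\<^sup>2)"
    and var: "\<And>i. variance (Y i) = \<sigma>\<^sup>2"
    and distr: "\<And>i. distr M borel (Y i) = distr M borel (Y 0)"
  shows "(\<lambda>t. prob {\<omega> \<in> space M. (\<Sum>i<t. Y i \<omega>) / sqrt (real t * \<sigma>\<^sup>2) \<le> z})
    \<longlonglongrightarrow> cdf std_normal_distribution z"
proof -
  define Z where "Z t \<omega> = (\<Sum>i<t. Y i \<omega>) / sqrt (real t * \<sigma>\<^sup>2)" for t \<omega>
  have [measurable]: "Y i \<in> borel_measurable M" for i
    using indep unfolding indep_vars_def by auto
  have "weak_conv_m (\<lambda>t. distr M borel (Z t)) std_normal_distribution"
    unfolding Z_def using central_limit_theorem_zero_mean[OF indep mean \<open>\<sigma> > 0\<close> square var distr] .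
  moreover have "cdf (distr M borel (Z t)) z = prob {\<omega> \<in> space M. Z t \<omega> \<le> z}" for t
    unfolding cdf_def Z_def by (subst measure_distr) (auto simp: vimage_def Int_def conj_commute)
  ultimately show ?thesis
    using isCont_cdf_std_normal[of z] unfolding weak_conv_m_def weak_conv_def Z_def by auto
qed

lemma (in prob_space) prob_abs_le_window:
  fixes S :: "'a \<Rightarrow> real"
  assumes "s > 0" "\<delta> > 0" "K < \<delta> * s" and [measurable]: "S \<in> borel_measurable M"
  shows "prob {\<omega> \<in> space M. \<bar>S \<omega>\<bar> \<le> K}
    \<le> prob {\<omega> \<in> space M. S \<omega> / s \<le> \<delta>} - prob {\<omega> \<in> space M. S \<omega> / s \<le> - \<delta>}"
proof -
  have "{\<omega> \<in> space M. \<bar>S \<omega>\<bar> \<le> K}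
      \<subseteq> {\<omega> \<in> space M. S \<omega> / s \<le> \<delta>} - {\<omega> \<in> space M. S \<omega> / s \<le> - \<delta>}"
  proof
    fix \<omega> assume "\<omega> \<in> {\<omega> \<in> space M. \<bar>S \<omega>\<bar> \<le> K}"
    then have \<omega>: "\<omega> \<in> space M" "\<bar>S \<omega>\<bar> < \<delta> * s"
      using assms(3) by auto
    then have "\<bar>S \<omega> / s\<bar> < \<delta>"
      using assms(1) by (simp add: abs_divide divide_less_eq)
    then have "S \<omega> / s < \<delta> \<and> - \<delta> < S \<omega> / s"
      by linarith
    with \<omega>(1) show "\<omega> \<in> {\<omega> \<in> space M. S \<omega> / s \<le> \<delta>} - {\<omega> \<in> space M. S \<omega> / s \<le> - \<delta>}"
      by auto
  qed
  then have "prob {\<omega> \<in> space M. \<bar>S \<omega>\<bar> \<le> K}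
      \<le> prob ({\<omega> \<in> space M. S \<omega> / s \<le> \<delta>} - {\<omega> \<in> space M. S \<omega> / s \<le> - \<delta>})"
    by (intro finite_measure_mono) measurable
  also have "\<dots> = prob {\<omega> \<in> space M. S \<omega> / s \<le> \<delta>} - prob {\<omega> \<in> space M. S \<omega> / s \<le> - \<delta>}"
    using assms(2) by (subst finite_measure_Diff) auto
  finally show ?thesis .
qed

text \<open>By the central limit theorem \<open>S\<^sub>t / \<surd>t\<close> has a continuous limit law, so \<open>S\<^sub>t\<close>
  leaves every bounded window with probability tending to one.\<close>
lemma (in prob_space) tendsto_prob_abs_sum_le:
  fixes Y :: "nat \<Rightarrow> 'a \<Rightarrow> real"
  assumes indep: "indep_vars (\<lambda>_. borel) Y UNIV"
    and mean: "\<And>i. expectation (Y i) = 0" and "\<sigma> > 0"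
    and square: "\<And>i. integrable M (\<lambda>\<omega>. (Y i \<omega>)\<^sup>2)"
    and var: "\<And>i. variance (Y i) = \<sigma>\<^sup>2"
    and distr: "\<And>i. distr M borel (Y i) = distr M borel (Y 0)"
  shows "(\<lambda>t. prob {\<omega> \<in> space M. \<bar>\<Sum>i<t. Y i \<omega>\<bar> \<le> K}) \<longlonglongrightarrow> 0"
proof (rule order_tendstoI)
  fix r :: real assume "r > 0"
  define F where "F t z = prob {\<omega> \<in> space M. (\<Sum>i<t. Y i \<omega>) / sqrt (real t * \<sigma>\<^sup>2) \<le> z}" for t z
  have [measurable]: "Y i \<in> borel_measurable M" for i
    using indep unfolding indep_vars_def by auto
  obtain \<delta> where "\<delta> > 0" and \<delta>: "cdf std_normal_distribution \<delta> - cdf std_normal_distribution (- \<delta>) < r"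
    using exists_std_normal_window_less[OF \<open>r > 0\<close>] .
  have "(\<lambda>t. F t \<delta> - F t (- \<delta>)) \<longlonglongrightarrow> cdf std_normal_distribution \<delta> - cdf std_normal_distribution (- \<delta>)"
    unfolding F_def by (intro tendsto_diff tendsto_prob_normalized_sum_le[OF assms])
  from order_tendstoD(2)[OF this \<delta>]
  have "\<forall>\<^sub>F t in sequentially. F t \<delta> - F t (- \<delta>) < r" .
  moreover have "\<forall>\<^sub>F t in sequentially. (K / \<delta>)\<^sup>2 / \<sigma>\<^sup>2 < real t"
    using filterlim_real_sequentially unfolding filterlim_at_top_dense by blast
  moreover have "\<forall>\<^sub>F t in sequentially. t > 0"
    by (rule eventually_gt_at_top)
  ultimately show "\<forall>\<^sub>F t in sequentially. prob {\<omega> \<in> space M. \<bar>\<Sum>i<t. Y i \<omega>\<bar> \<le> K} < r"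
  proof eventually_elim
    case (elim t)
    define s where "s = sqrt (real t * \<sigma>\<^sup>2)"
    have "s > 0" using elim(3) \<open>\<sigma> > 0\<close> by (simp add: s_def)
    have "K / \<delta> < s"
      unfolding s_def using elim(2) \<open>\<sigma> > 0\<close> by (intro real_less_rsqrt) (simp add: divide_less_eq)
    then have "K < \<delta> * s" using \<open>\<delta> > 0\<close> by (simp add: divide_less_eq mult.commute)
    have "prob {\<omega> \<in> space M. \<bar>\<Sum>i<t. Y i \<omega>\<bar> \<le> K} \<le> F t \<delta> - F t (- \<delta>)"
      unfolding F_def s_def[symmetric]
      by (rule prob_abs_le_window[OF \<open>s > 0\<close> \<open>\<delta> > 0\<close> \<open>K < \<delta> * s\<close>]) measurable
    then show ?case using elim(1) by linarith
  qed
qed (auto intro!: always_eventually less_le_trans[OF _ measure_nonneg])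

lemma (in iid_uniform) distr_borel_comp_xi_eq:
  "distr M borel (\<lambda>\<omega>. g (\<xi> s \<omega>)) = distr M borel (\<lambda>\<omega>. g (\<xi> t \<omega>))"
proof -
  have "distr M borel (\<lambda>\<omega>. g (\<xi> s \<omega>)) = distr (distr M (count_space UNIV) (\<xi> s)) borel g" for s
    by (subst distr_distr) (auto simp: comp_def)
  moreover have "distr M (count_space UNIV) (\<xi> s) = distr M (count_space UNIV) (\<xi> t)"
    using distr_xi_eq[of id s t] by simp
  ultimately show ?thesis by simp
qed

lemma (in iid_uniform) tendsto_prob_visits_close:
  assumes "j \<noteq> k"
  shows "(\<lambda>t. prob {\<omega> \<in> space M. \<bar>real (visits \<xi> \<omega> j t) - real (visits \<xi> \<omega> k t)\<bar> \<le> K}) \<longlonglongrightarrow> 0"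
proof -
  define g :: "'d \<Rightarrow> real" where "g y = of_bool (y = j) - of_bool (y = k)" for y
  define Y where "Y s \<omega> = g (\<xi> s \<omega>)" for s \<omega>
  define d where "d = real CARD('d)"
  define Aj where "Aj s = {\<omega> \<in> space M. \<xi> s \<omega> = j}" for s
  define Ak where "Ak s = {\<omega> \<in> space M. \<xi> s \<omega> = k}" for s
  have "d > 0" by (simp add: d_def)
  have [measurable]: "Aj s \<in> events" "Ak s \<in> events" for s
    unfolding Aj_def Ak_def by measurable
  have Y_ind: "Y s \<omega> = indicator (Aj s) \<omega> - indicator (Ak s) \<omega>"
    and Y2_ind: "(Y s \<omega>)\<^sup>2 = indicator (Aj s) \<omega> + indicator (Ak s) \<omega>" if "\<omega> \<in> space M" for s \<omega>
    using that \<open>j \<noteq> k\<close> by (auto simp: Y_def g_def Aj_def Ak_def indicator_def)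
  have integrable_ind: "integrable M (indicator A :: 'a \<Rightarrow> real)" if "A \<in> events" for A
    using that by (intro integrable_const_bound[where B = 1]) (auto simp: indicator_def)
  have mean: "expectation (Y s) = 0" for s
  proof -
    have "expectation (Y s) = prob (Aj s) - prob (Ak s)"
      by (simp add: Y_ind integrable_ind Bochner_Integration.integral_diff cong: Bochner_Integration.integral_cong)
    then show ?thesis by (simp add: Aj_def Ak_def uniform)
  qed
  have second_moment: "expectation (\<lambda>\<omega>. (Y s \<omega>)\<^sup>2) = 2 / d" for s
  proof -
    have "expectation (\<lambda>\<omega>. (Y s \<omega>)\<^sup>2) = prob (Aj s) + prob (Ak s)"
      by (simp add: Y2_ind integrable_ind Bochner_Integration.integral_add cong: Bochner_Integration.integral_cong)
    then show ?thesis by (simp add: Aj_def Ak_def uniform d_def)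
  qed
  have "indep_vars (\<lambda>_. borel) Y UNIV"
    unfolding Y_def by (rule indep_vars_compose2[OF indep, where Y = "\<lambda>_. g"]) simp
  moreover have "integrable M (\<lambda>\<omega>. (Y s \<omega>)\<^sup>2)" for s
    by (intro integrable_const_bound[where B = 1]) (auto simp: Y_def g_def)
  moreover have "variance (Y s) = (sqrt (2 / d))\<^sup>2" for s
    using \<open>d > 0\<close> by (simp add: mean second_moment)
  moreover have "distr M borel (Y s) = distr M borel (Y 0)" for s
    unfolding Y_def by (rule distr_borel_comp_xi_eq)
  ultimately have "(\<lambda>t. prob {\<omega> \<in> space M. \<bar>\<Sum>i<t. Y i \<omega>\<bar> \<le> K}) \<longlonglongrightarrow> 0"
    using \<open>d > 0\<close> by (intro tendsto_prob_abs_sum_le[where \<sigma> = "sqrt (2 / d)"] mean) auto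
  moreover have "(\<Sum>i<t. Y i \<omega>) = real (visits \<xi> \<omega> j t) - real (visits \<xi> \<omega> k t)" for t \<omega>
    by (simp add: Y_def g_def visits_eq_sum sum_subtractf of_bool_def)
  ultimately show ?thesis by simp
qed

lemma rho_P_reweight_le:
  fixes x y :: "real ^ 'd"
  assumes q: "q \<ge> 1" and x: "norm x = 1" and y: "norm y = 1" and supp: "support x = support y"
    and m: "m > 0" "\<And>j. j \<in> support x \<Longrightarrow> m \<le> \<bar>x $ j\<bar> \<and> m \<le> \<bar>y $ j\<bar>"
    and gap: "\<And>j k. j \<in> support x \<Longrightarrow> k \<in> support x \<Longrightarrow> j \<noteq> k \<Longrightarrow> real K < \<bar>real (n j) - real (n k)\<bar>"
  shows "rho_P (sphere_proj (reweight q x n), sphere_proj (reweight q y n)) \<le> 4 * real CARD('d) / (m * q ^ (K + 1))"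
proof -
  have "Max (n ` support x) \<in> n ` support x"
    using support_nonempty[OF x] by (intro Max_in) auto
  then obtain k where k: "k \<in> support x" "n k = Max (n ` support x)" by auto
  have lead: "n j + K + 1 \<le> n k" if "j \<in> support x" "j \<noteq> k" for j
    using gap[OF that(1) k(1) that(2)] Max_ge[of "n ` support x" "n j"] that(1) k(2) by simp
  have "x $ k \<noteq> 0" "y $ k \<noteq> 0" using k(1) supp by (auto simp: support_def)
  have "rho_P (sphere_proj (reweight q x n), sphere_proj (reweight q y n))
      \<le> norm (sphere_proj (reweight q x n) - sgn (x $ k) *\<^sub>R axis k 1)
        + norm (sphere_proj (reweight q y n) - sgn (y $ k) *\<^sub>R axis k 1)"
    using \<open>x $ k \<noteq> 0\<close> \<open>y $ k \<noteq> 0\<close> q x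
    by (intro rho_P_le_near_axis norm_sphere_proj reweight_nonzero) (auto simp: abs_sgn_eq)
  also have "\<dots> \<le> 2 * real CARD('d) / (m * q ^ (K + 1)) + 2 * real CARD('d) / (m * q ^ (K + 1))"
    using m k(1) lead supp
    by (intro add_mono sphere_proj_reweight_near_axis[OF q x] sphere_proj_reweight_near_axis[OF q y]) auto
  finally show ?thesis by simp
qed

lemma rho_P_tendsto_0_if_dist_tendsto_0_or_2:
  fixes x y :: "nat \<Rightarrow> real ^ 'd"
  assumes x: "\<And>t. norm (x t) = 1" and y: "\<And>t. norm (y t) = 1"
    and "(\<lambda>t. norm (x t - y t)) \<longlonglongrightarrow> 0 \<or> (\<lambda>t. norm (x t - y t)) \<longlonglongrightarrow> 2"
  shows "(\<lambda>t. rho_P (x t, y t)) \<longlonglongrightarrow> 0"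
  using assms(3)
proof
  assume "(\<lambda>t. norm (x t - y t)) \<longlonglongrightarrow> 0"
  then show ?thesis
    by (rule Lim_null_comparison[rotated])
      (intro always_eventually allI, simp add: rho_P_nonneg rho_P_le_norm_diff[OF x])
next
  assume "(\<lambda>t. norm (x t - y t)) \<longlonglongrightarrow> 2"
  then have "(\<lambda>t. sqrt (4 - (norm (x t - y t))\<^sup>2)) \<longlonglongrightarrow> sqrt (4 - 2\<^sup>2)"
    by (intro tendsto_intros)
  moreover have "norm (x t + y t) = sqrt (4 - (norm (x t - y t))\<^sup>2)" for t
  proof -
    have "(norm (x t + y t))\<^sup>2 + (norm (x t - y t))\<^sup>2 = 2 * (norm (x t))\<^sup>2 + 2 * (norm (y t))\<^sup>2"
      by (simp add: power2_norm_eq_inner inner_add_left inner_add_right inner_diff_left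
          inner_diff_right inner_commute)
    then have "(norm (x t + y t))\<^sup>2 = 4 - (norm (x t - y t))\<^sup>2" using x y by simp
    then show ?thesis by (intro real_sqrt_unique[symmetric]) auto
  qed
  ultimately have "(\<lambda>t. norm (x t + y t)) \<longlonglongrightarrow> 0" by simp
  then show ?thesis
    by (rule Lim_null_comparison[rotated])
      (intro always_eventually allI, simp add: rho_P_nonneg rho_P_le_norm_add[OF x])
qed

lemma exists_gap_rho_P_reweight_less:
  fixes x y :: "real ^ 'd"
  assumes q: "q > 1" and x: "norm x = 1" and y: "norm y = 1" and supp: "support x = support y"
    and "\<epsilon> > 0"
  shows "\<exists>K :: nat. \<forall>n. (\<forall>j\<in>support x. \<forall>k\<in>support x. j \<noteq> k \<longrightarrow> real K < \<bar>real (n j) - real (n k)\<bar>)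
    \<longrightarrow> rho_P (sphere_proj (reweight q x n), sphere_proj (reweight q y n)) < \<epsilon>"
proof -
  define m where "m = Min ((\<lambda>j. min \<bar>x $ j\<bar> \<bar>y $ j\<bar>) ` support x)"
  have "m > 0"
    using support_nonempty[OF x] supp unfolding m_def by (subst Min_gr_iff) (auto simp: support_def)
  have m_le: "m \<le> \<bar>x $ j\<bar> \<and> m \<le> \<bar>y $ j\<bar>" if "j \<in> support x" for j
  proof -
    have "m \<le> min \<bar>x $ j\<bar> \<bar>y $ j\<bar>" unfolding m_def using that by (intro Min_le) auto
    then show ?thesis by simp
  qed
  define C where "C = 4 * real CARD('d) / m"
  obtain K where "C / \<epsilon> < q ^ K"
    using real_arch_pow[OF q] by blast
  also have "\<dots> \<le> q ^ (K + 1)"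
    using q by (intro power_increasing) auto
  finally have "C < \<epsilon> * q ^ (K + 1)"
    using \<open>\<epsilon> > 0\<close> by (simp add: pos_divide_less_eq mult.commute)
  then have "C / q ^ (K + 1) < \<epsilon>"
    using q by (simp add: pos_divide_less_eq)
  moreover have "4 * real CARD('d) / (m * q ^ (K + 1)) = C / q ^ (K + 1)"
    by (simp add: C_def)
  ultimately have K: "4 * real CARD('d) / (m * q ^ (K + 1)) < \<epsilon>"
    by simp
  show ?thesis
  proof (intro exI allI impI)
    fix n :: "'d \<Rightarrow> nat"
    assume "\<forall>j\<in>support x. \<forall>k\<in>support x. j \<noteq> k \<longrightarrow> real K < \<bar>real (n j) - real (n k)\<bar>"
    then have "rho_P (sphere_proj (reweight q x n), sphere_proj (reweight q y n))
        \<le> 4 * real CARD('d) / (m * q ^ (K + 1))"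
      using q \<open>m > 0\<close> m_le by (intro rho_P_reweight_le[OF _ x y supp]) auto
    then show "rho_P (sphere_proj (reweight q x n), sphere_proj (reweight q y n)) < \<epsilon>"
      using K by (rule order.strict_trans1)
  qed
qed

context iid_uniform
begin

lemma weak_polarization:
  assumes "\<eta> > 0" and x: "norm x = 1" and y: "norm y = 1" and supp: "support x = support y"
    and "\<epsilon> > 0"
  shows "(\<lambda>t. prob {\<omega> \<in> space M. rho_P (hjmr_traj \<eta> (\<lambda>\<omega> t. \<xi> t \<omega>) x \<omega> t,
                                          hjmr_traj \<eta> (\<lambda>\<omega> t. \<xi> t \<omega>) y \<omega> t) \<ge> \<epsilon>}) \<longlonglongrightarrow> 0"
proof -
  let ?far = "\<lambda>t. {\<omega> \<in> space M. rho_P (hjmr_traj \<eta> (\<lambda>\<omega> t. \<xi> t \<omega>) x \<omega> t,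
                                            hjmr_traj \<eta> (\<lambda>\<omega> t. \<xi> t \<omega>) y \<omega> t) \<ge> \<epsilon>}"
  have "1 + \<eta> > 1" using \<open>\<eta> > 0\<close> by simp
  from exists_gap_rho_P_reweight_less[OF this x y supp \<open>\<epsilon> > 0\<close>]
  obtain K :: nat where K: "\<forall>n. (\<forall>j\<in>support x. \<forall>k\<in>support x. j \<noteq> k \<longrightarrow> real K < \<bar>real (n j) - real (n k)\<bar>)
      \<longrightarrow> rho_P (sphere_proj (reweight (1 + \<eta>) x n), sphere_proj (reweight (1 + \<eta>) y n)) < \<epsilon>" ..
  define P where "P = {(j, k). j \<in> support x \<and> k \<in> support x \<and> j \<noteq> k}"
  define close where "close p t = {\<omega> \<in> space M. \<bar>real (visits \<xi> \<omega> (fst p) t) - real (visits \<xi> \<omega> (snd p) t)\<bar> \<le> real K}" for p t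
  have close_sets: "close p t \<in> events" for p t
    unfolding close_def using borel_measurable_visits[OF measurable_xi] by measurable
  have "?far t \<subseteq> (\<Union>p\<in>P. close p t)" for t
  proof (rule subsetI, rule ccontr)
    fix \<omega> assume "\<omega> \<in> ?far t" and not_close: "\<omega> \<notin> (\<Union>p\<in>P. close p t)"
    have "\<forall>j\<in>support x. \<forall>k\<in>support x. j \<noteq> k \<longrightarrow> real K < \<bar>real (visits \<xi> \<omega> j t) - real (visits \<xi> \<omega> k t)\<bar>"
    proof (intro ballI impI)
      fix j k assume "j \<in> support x" "k \<in> support x" "j \<noteq> k"
      then have "(j, k) \<in> P" by (simp add: P_def)
      then have "\<omega> \<notin> close (j, k) t" using not_close by blast
      then show "real K < \<bar>real (visits \<xi> \<omega> j t) - real (visits \<xi> \<omega> k t)\<bar>"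
        using \<open>\<omega> \<in> ?far t\<close> by (simp add: close_def not_le)
    qed
    then have "rho_P (hjmr_traj \<eta> (\<lambda>\<omega> t. \<xi> t \<omega>) x \<omega> t, hjmr_traj \<eta> (\<lambda>\<omega> t. \<xi> t \<omega>) y \<omega> t) < \<epsilon>"
      unfolding hjmr_traj_eq_reweight[OF \<open>\<eta> > 0\<close> x] hjmr_traj_eq_reweight[OF \<open>\<eta> > 0\<close> y] by (rule K[THEN spec, THEN mp])
    with \<open>\<omega> \<in> ?far t\<close> show False by simp
  qed
  then have "prob (?far t) \<le> prob (\<Union>p\<in>P. close p t)" for t
    using close_sets by (intro finite_measure_mono) (auto simp: P_def)
  also have "prob (\<Union>p\<in>P. close p t) \<le> (\<Sum>p\<in>P. prob (close p t))" for t
    using close_sets by (intro finite_measure_subadditive_finite) (auto simp: P_def)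
  finally have le_sum: "prob (?far t) \<le> (\<Sum>p\<in>P. prob (close p t))" for t .
  have "(\<lambda>t. \<Sum>p\<in>P. prob (close p t)) \<longlonglongrightarrow> 0"
    unfolding close_def by (intro tendsto_null_sum tendsto_prob_visits_close) (auto simp: P_def)
  from tendsto_sandwich[OF always_eventually always_eventually tendsto_const this] show ?thesis
    using le_sum by auto
qed

lemma AE_not_strong_polarization:
  assumes "\<eta> > 0" and x: "norm x = 1" and y: "norm y = 1" and supp: "support x = support y"
    and "x \<noteq> y" "x \<noteq> - y"
  shows "AE \<omega> in M. \<not> (\<lambda>t. rho_P (hjmr_traj \<eta> (\<lambda>\<omega> t. \<xi> t \<omega>) x \<omega> t,
                                    hjmr_traj \<eta> (\<lambda>\<omega> t. \<xi> t \<omega>) y \<omega> t)) \<longlonglongrightarrow> 0"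
proof -
  have "AE \<omega> in M. \<forall>b. \<not> falls_behind (\<lambda>t j. visits \<xi> \<omega> j t) b"
    by (simp add: AE_all_countable AE_not_falls_behind)
  then show ?thesis
  proof (rule AE_mp, intro AE_I2 impI notI)
    fix \<omega>
    define X where "X z t = sphere_proj (reweight (1 + \<eta>) z (\<lambda>j. visits \<xi> \<omega> j t))" for z t
    have traj: "hjmr_traj \<eta> (\<lambda>\<omega> t. \<xi> t \<omega>) z \<omega> t = X z t" if "norm z = 1" for z t
      unfolding X_def using \<open>\<eta> > 0\<close> that by (rule hjmr_traj_eq_reweight)
    have unit: "norm (X z t) = 1" if "norm z = 1" for z t
      unfolding X_def using \<open>\<eta> > 0\<close> that by (intro norm_sphere_proj reweight_nonzero) auto
    assume "\<forall>b. \<not> falls_behind (\<lambda>t j. visits \<xi> \<omega> j t) b"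
      and "(\<lambda>t. rho_P (hjmr_traj \<eta> (\<lambda>\<omega> t. \<xi> t \<omega>) x \<omega> t, hjmr_traj \<eta> (\<lambda>\<omega> t. \<xi> t \<omega>) y \<omega> t)) \<longlonglongrightarrow> 0"
    then have "(\<lambda>t. rho_P (X x t, X y t)) \<longlonglongrightarrow> 0" by (simp add: traj x y)
    then have "(\<lambda>t. minor (X x t) (X y t) j k) \<longlonglongrightarrow> 0" for j k
      by (rule Lim_null_comparison[rotated, OF tendsto_mult_right_zero[where c = 4]])
        (use abs_minor_le_rho_P[OF unit[OF x] unit[OF y]] in auto)
    then have "\<exists>b. falls_behind (\<lambda>t j. visits \<xi> \<omega> j t) b"
      using \<open>\<eta> > 0\<close> by (intro falls_behind_if_minors_vanish[OF _ x y supp \<open>x \<noteq> y\<close> \<open>x \<noteq> - y\<close>])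
        (auto simp: X_def visits_Suc)
    with \<open>\<forall>b. \<not> falls_behind (\<lambda>t j. visits \<xi> \<omega> j t) b\<close> show False by blast
  qed
qed

end

theorem theorem4p11:
  fixes M :: "'a measure" and \<xi> :: "nat \<Rightarrow> 'a \<Rightarrow> 'd::finite"
    and \<eta> :: real and x1 x2 :: "real ^ 'd"
  assumes "prob_space M"
    and "prob_space.indep_vars M (\<lambda>_. count_space UNIV) \<xi> UNIV"
    and "\<And>t k. measure M {\<omega> \<in> space M. \<xi> t \<omega> = k} = 1 / real CARD('d)"
    and "\<eta> > 0"
    and "norm x1 = 1" and "norm x2 = 1"
    and "support x1 = support x2"
    and "x1 \<noteq> x2" and "x1 \<noteq> - x2"
  defines "X \<equiv> \<lambda>\<omega> t. (hjmr_traj \<eta> (\<lambda>\<omega> t. \<xi> t \<omega>) x1 \<omega> t,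
                         hjmr_traj \<eta> (\<lambda>\<omega> t. \<xi> t \<omega>) x2 \<omega> t)"
  shows "(\<forall>\<epsilon>>0. (\<lambda>t. measure M {\<omega> \<in> space M. rho_P (X \<omega> t) \<ge> \<epsilon>}) \<longlonglongrightarrow> 0)
       \<and> (AE \<omega> in M. \<not> ((\<lambda>t. norm (fst (X \<omega> t) - snd (X \<omega> t))) \<longlonglongrightarrow> 0)
                    \<and> \<not> ((\<lambda>t. norm (fst (X \<omega> t) - snd (X \<omega> t))) \<longlonglongrightarrow> 2))
       \<and> (AE \<omega> in M. \<not> ((\<lambda>t. rho_P (X \<omega> t)) \<longlonglongrightarrow> 0))"
proof -
  interpret iid_uniform M \<xi>
    using assms(1-3) by (simp add: iid_uniform_def iid_uniform_axioms_def)
  have "x1 \<noteq> 0" "x2 \<noteq> 0" using assms(5,6) by auto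
  then have unit: "norm (fst (X \<omega> t)) = 1" "norm (snd (X \<omega> t)) = 1" for \<omega> t
    unfolding X_def using assms(4-6)
    by (simp_all add: hjmr_traj_eq_reweight norm_sphere_proj reweight_nonzero)
  have weak: "(\<lambda>t. measure M {\<omega> \<in> space M. rho_P (X \<omega> t) \<ge> \<epsilon>}) \<longlonglongrightarrow> 0" if "\<epsilon> > 0" for \<epsilon>
    unfolding X_def using weak_polarization[OF assms(4-7) that] .
  have not_strong: "AE \<omega> in M. \<not> ((\<lambda>t. rho_P (X \<omega> t)) \<longlonglongrightarrow> 0)"
    unfolding X_def using AE_not_strong_polarization[OF assms(4-9)] .
  then have "AE \<omega> in M. \<not> ((\<lambda>t. norm (fst (X \<omega> t) - snd (X \<omega> t))) \<longlonglongrightarrow> 0)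
                    \<and> \<not> ((\<lambda>t. norm (fst (X \<omega> t) - snd (X \<omega> t))) \<longlonglongrightarrow> 2)"
  proof eventually_elim
    case (elim \<omega>)
    then show ?case
      using rho_P_tendsto_0_if_dist_tendsto_0_or_2[of "\<lambda>t. fst (X \<omega> t)" "\<lambda>t. snd (X \<omega> t)"] unit
      by auto
  qed
  with weak not_strong show ?thesis by blast
qed

end
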